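(* Let $k\ge 2$ be an integer. The number $b_0(\mathcal F_k)$ of connected components of the $k$-Farey graph $\mathcal F_k$ is \[ b_0(\mathcal F_k)=\begin{cases} p^{\ell-1}(p+1) & \text{if } k=p^\ell \text{ for a prime } p \text{ and an integer } \ell>0,\\ \infty & \text{otherwise.}\end{cases} \]
   Context: The vertex set $V$ consists of all reduced fractions $p/q$ with $p,q\in\mathbb Z$, $\gcd(p,q)=1$, together with $1/0$; here $p/q$ and $(-p)/(-q)$ denote the same vertex. For vertices define $d(p/q,a/b)=|pb-qa|$ (well defined). The $k$-Farey graph $\mathcal F_k$ has vertex set $V$, with an edge between $p/q$ and $a/b$ exactly when $d(p/q,a/b)=k$. *)

theory Defs
  imports "HOL-Computational_Algebra.Primes"
begin

text \<open>Vertices of the k-Farey graph: reduced fractions p/q, together with 1/0, where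
  p/q and (-p)/(-q) are identified.\<close>
definition farey_vertices :: "(int \<times> int) set" where
  "farey_vertices = {(p, q). coprime p q \<and> (q > 0 \<or> (q = 0 \<and> p = 1))}"

definition farey_dist :: "int \<times> int \<Rightarrow> int \<times> int \<Rightarrow> int" where
  "farey_dist u v = \<bar>fst u * snd v - snd u * fst v\<bar>"

definition farey_edges :: "nat \<Rightarrow> ((int \<times> int) \<times> (int \<times> int)) set" where
  "farey_edges k = {(u, v). u \<in> farey_vertices \<and> v \<in> farey_vertices \<and> farey_dist u v = int k}"

definition farey_components :: "nat \<Rightarrow> (int \<times> int) set set" where
  "farey_components k = farey_vertices // ((farey_edges k)\<^sup>*)"

end

theory Submission
  imports Defs
begin

text \<open>
  Along an edge of \<open>\<F>\<^sub>k\<close> the determinant of the endpoints is \<open>\<plusminus>k\<close>, and for a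
  primitive middle vector \<open>v\<close> the divisibilities \<open>k | det(u,v)\<close>, \<open>k | det(v,w)\<close> imply
  \<open>k | det(u,w)\<close>.  So every component lies in a class of the congruence
  \<open>k | det(u,v)\<close>, i.e. in a fibre of the reduction map to the projective line over
  \<open>\<int>/k\<close>.

  For \<open>k = p\<^sup>l\<close> each such class is connected: completing \<open>u\<close> to a basis \<open>u, w\<close> of
  \<open>\<int>\<^sup>2\<close>, the map \<open>(\<alpha>, \<beta>) \<mapsto> \<alpha>u + k\<beta>w\<close> sends unimodular pairs of primitive vectors
  with first coordinate prime to \<open>p\<close> to edges of \<open>\<F>\<^sub>k\<close>, and a Euclidean descent
  connects all such vectors to \<open>(1, 0)\<close>.  The classes are then represented by the
  \<open>p\<^sup>l + p\<^sup>l\<^sup>-\<^sup>1\<close> points \<open>[1 : c]\<close> and \<open>[pj : 1]\<close> of the projective line.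

  If two distinct primes \<open>p, q\<close> divide \<open>k\<close>, pick \<open>n\<close> with \<open>p | n\<close> and \<open>q | n + 1\<close>.
  A Farey neighbour of a fraction strictly between \<open>n\<close> and \<open>n + 1\<close> lies in the
  closed interval and could only be an endpoint \<open>n/1\<close> or \<open>(n+1)/1\<close>, which are not
  adjacent to anything with denominator divisible by \<open>k\<close>.  Hence the fractions in
  \<open>(n, n + 1)\<close> with denominator divisible by \<open>k\<close> form a union of components, and the
  infinitely many such \<open>n\<close> give infinitely many components.
\<close>

section \<open>The determinant congruence\<close>

definition det2 :: "int \<times> int \<Rightarrow> int \<times> int \<Rightarrow> int" where
  "det2 u v = fst u * snd v - snd u * fst v"

lemma det2_swap: "det2 v u = - det2 u v"
  unfolding det2_def by simp

lemma farey_edges_iff: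
  "(u, v) \<in> farey_edges k \<longleftrightarrow>
     u \<in> farey_vertices \<and> v \<in> farey_vertices \<and> \<bar>det2 u v\<bar> = int k"
  unfolding farey_edges_def farey_dist_def det2_def by simp

lemma farey_vertex_coprime: "u \<in> farey_vertices \<Longrightarrow> coprime (fst u) (snd u)"
  unfolding farey_vertices_def by auto

lemma coprime_if_abs_det2_eq_1:
  assumes "\<bar>det2 u v\<bar> = 1"
  shows "coprime (fst u) (snd u)" "coprime (fst v) (snd v)"
proof -
  have "is_unit c" if "c dvd fst u \<and> c dvd snd u \<or> c dvd fst v \<and> c dvd snd v" for c
  proof -
    have "c dvd det2 u v" using that unfolding det2_def by auto
    then have "c dvd \<bar>det2 u v\<bar>" by simp
    then show ?thesis using assms by simp
  qed
  then show "coprime (fst u) (snd u)" "coprime (fst v) (snd v)" by (auto intro: coprimeI)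
qed

lemma dvd_det2_trans:
  assumes "coprime (fst v) (snd v)" "K dvd det2 u v" "K dvd det2 v w"
  shows "K dvd det2 u w"
proof -
  obtain x y where "x * fst v + y * snd v = 1"
    using bezout_int[of "fst v" "snd v"] assms(1) by auto
  then have "det2 u w = det2 u w * (x * fst v + y * snd v)" by simp
  also have "\<dots> = (x * fst w + y * snd w) * det2 u v + (x * fst u + y * snd u) * det2 v w"
    unfolding det2_def by (simp add: algebra_simps)
  finally show ?thesis using assms(2,3) by simp
qed

definition farey_cong :: "nat \<Rightarrow> ((int \<times> int) \<times> (int \<times> int)) set" where
  "farey_cong k = {(u, v). u \<in> farey_vertices \<and> v \<in> farey_vertices \<and> int k dvd det2 u v}"

lemma equiv_farey_cong: "equiv farey_vertices (farey_cong k)"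
proof (rule equivI)
  show "refl_on farey_vertices (farey_cong k)"
    unfolding refl_on_def farey_cong_def det2_def by (auto simp: mult.commute)
  show "sym (farey_cong k)"
  proof (rule symI)
    fix u v assume "(u, v) \<in> farey_cong k"
    then show "(v, u) \<in> farey_cong k" unfolding farey_cong_def by (simp add: det2_swap[of v u])
  qed
  show "trans (farey_cong k)"
    unfolding trans_def farey_cong_def using dvd_det2_trans farey_vertex_coprime by blast
qed (auto simp: farey_cong_def)

lemma farey_reachable_imp_cong:
  assumes "(u, v) \<in> (farey_edges k)\<^sup>*" and "u \<in> farey_vertices"
  shows "(u, v) \<in> farey_cong k"
  using assms(1)
proof (induction rule: rtrancl_induct)
  case base
  then show ?case using assms(2) equiv_farey_cong by (simp add: equiv_def refl_on_def)
next
  case (step v w)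
  then have "(v, w) \<in> farey_cong k"
    unfolding farey_edges_iff farey_cong_def by (metis (mono_tags) case_prodI dvd_abs_iff
        dvd_refl mem_Collect_eq)
  then show ?case using step.IH equiv_farey_cong by (meson equiv_def transD)
qed

section \<open>Strips between consecutive integers\<close>

lemma unimodular_neighbour_between:
  fixes a b c d n :: int
  assumes between: "n * b < a" "a < (n + 1) * b"
    and unimodular: "\<bar>a * d - b * c\<bar> = 1" and "d \<ge> 0"
    and not_left: "(c, d) \<noteq> (n, 1)" and not_right: "(c, d) \<noteq> (n + 1, 1)"
  shows "0 < d \<and> n * d < c \<and> c < (n + 1) * d"
proof -
  have b_pos: "b > 0" using between by (simp add: algebra_simps)
  have gaps: "a - n * b \<ge> 1" "(n + 1) * b - a \<ge> 1" using between by auto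
  have d_pos: "d > 0"
  proof (rule ccontr)
    assume "\<not> d > 0"
    with \<open>d \<ge> 0\<close> have "\<bar>b * c\<bar> = 1" using unimodular by simp
    moreover have "b dvd \<bar>b * c\<bar>" by simp
    ultimately have "b = 1" using b_pos by simp
    then show False using between by simp
  qed
  text \<open>Both sides of each identity below are sums of two nonnegative terms, the first
    at least \<open>d\<close>; equality with \<open>1\<close> forces \<open>d = 1\<close> and \<open>c\<close> to be an endpoint.\<close>
  have "n * d < c"
  proof (rule ccontr)
    assume "\<not> n * d < c"
    then have "b * (n * d - c) \<ge> 0" using b_pos by simp
    moreover have "d * (a - n * b) \<ge> d" using mult_left_mono[OF gaps(1)] d_pos by simp
    moreover have "a * d - b * c = d * (a - n * b) + b * (n * d - c)"
      by (simp add: algebra_simps)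
    ultimately have "d * (a - n * b) = 1" "b * (n * d - c) = 0"
      using unimodular d_pos by linarith+
    then have "d = 1" "c = n" using b_pos d_pos by (auto simp: zmult_eq_1_iff)
    then show False using not_left by simp
  qed
  moreover have "c < (n + 1) * d"
  proof (rule ccontr)
    assume "\<not> c < (n + 1) * d"
    then have "b * (c - (n + 1) * d) \<ge> 0" using b_pos by simp
    moreover have "d * ((n + 1) * b - a) \<ge> d" using mult_left_mono[OF gaps(2)] d_pos by simp
    moreover have "b * c - a * d = d * ((n + 1) * b - a) + b * (c - (n + 1) * d)"
      by (simp add: algebra_simps)
    ultimately have "d * ((n + 1) * b - a) = 1" "b * (c - (n + 1) * d) = 0"
      using unimodular d_pos by linarith+
    then have "d = 1" "c = n + 1" using b_pos d_pos by (auto simp: zmult_eq_1_iff)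
    then show False using not_right by simp
  qed
  ultimately show ?thesis using d_pos by simp
qed

definition farey_strip :: "nat \<Rightarrow> int \<Rightarrow> (int \<times> int) set" where
  "farey_strip k n = {(a, int k * b) | a b. n * b < a \<and> a < (n + 1) * b}"

lemma farey_strip_edge_closed:
  assumes "\<not> coprime n (int k)" "\<not> coprime (n + 1) (int k)" "k > 0"
    and edge: "(u, v) \<in> farey_edges k" and u_strip: "u \<in> farey_strip k n"
  shows "v \<in> farey_strip k n"
proof -
  obtain a b where u: "u = (a, int k * b)" and between: "n * b < a" "a < (n + 1) * b"
    using u_strip unfolding farey_strip_def by auto
  obtain c e where v: "v = (c, e)" by (cases v)
  have "coprime a (int k)" "coprime c e" "e \<ge> 0"
    using edge u v unfolding farey_edges_iff farey_vertices_def by auto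
  have dist: "\<bar>a * e - int k * b * c\<bar> = int k"
    using edge u v unfolding farey_edges_iff det2_def by simp
  then have "int k dvd a * e - int k * b * c" by (metis dvd_abs_iff dvd_refl)
  then have "int k dvd a * e" by (metis dvd_add dvd_triv_left diff_add_cancel mult.assoc)
  then have "int k dvd e"
    using \<open>coprime a (int k)\<close> by (simp add: coprime_commute coprime_dvd_mult_right_iff)
  then obtain d where e: "e = int k * d" ..
  have "a * e - int k * b * c = int k * (a * d - b * c)"
    unfolding e by (simp add: algebra_simps)
  then have "int k * \<bar>a * d - b * c\<bar> = int k * 1" using dist by (simp add: abs_mult)
  then have "\<bar>a * d - b * c\<bar> = 1" using \<open>k > 0\<close> by simp
  moreover have "d \<ge> 0" using \<open>e \<ge> 0\<close> \<open>k > 0\<close> e by (simp add: zero_le_mult_iff)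
  moreover have "(c, d) \<noteq> (n, 1)" "(c, d) \<noteq> (n + 1, 1)"
    using assms(1,2) \<open>coprime c e\<close> e by auto
  ultimately have "n * d < c \<and> c < (n + 1) * d"
    using unimodular_neighbour_between[OF between] by blast
  then show ?thesis unfolding farey_strip_def v e by auto
qed

lemma farey_strip_reachable_closed:
  assumes "\<not> coprime n (int k)" "\<not> coprime (n + 1) (int k)" "k > 0"
    and "(u, v) \<in> (farey_edges k)\<^sup>*" and "u \<in> farey_strip k n"
  shows "v \<in> farey_strip k n"
  using assms(4,5) by induction (use farey_strip_edge_closed[OF assms(1-3)] in blast)+

lemma farey_strip_witness:
  fixes n :: int
  assumes "k \<ge> 2"
  shows "(n * int k + 1, int k * int k) \<in> farey_vertices"
    and "(n * int k + 1, int k * int k) \<in> farey_strip k m \<longleftrightarrow> m = n"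
proof -
  have "coprime (n * int k + 1) (int k)"
  proof (rule coprimeI)
    fix c assume "c dvd n * int k + 1" "c dvd int k"
    then have "c dvd (n * int k + 1) - n * int k" by (metis dvd_diff dvd_mult)
    then show "is_unit c" by simp
  qed
  then show "(n * int k + 1, int k * int k) \<in> farey_vertices"
    using assms unfolding farey_vertices_def by simp
  have "(n * int k + 1, int k * int k) \<in> farey_strip k m \<longleftrightarrow>
        m * int k < n * int k + 1 \<and> n * int k + 1 < (m + 1) * int k"
    using assms unfolding farey_strip_def by auto
  also have "\<dots> \<longleftrightarrow> m \<le> n \<and> n < m + 1"
  proof
    assume "m * int k < n * int k + 1 \<and> n * int k + 1 < (m + 1) * int k"
    then have "m * int k \<le> n * int k" "n * int k < (m + 1) * int k" by auto
    then show "m \<le> n \<and> n < m + 1" using assms by (simp_all add: mult_le_cancel_right)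
  next
    assume "m \<le> n \<and> n < m + 1"
    then have "m = n" by linarith
    then show "m * int k < n * int k + 1 \<and> n * int k + 1 < (m + 1) * int k"
      using assms by (auto simp: algebra_simps)
  qed
  finally show "(n * int k + 1, int k * int k) \<in> farey_strip k m \<longleftrightarrow> m = n" by auto
qed

lemma infinite_farey_components_if_infinitely_many_strips:
  assumes "k \<ge> 2"
    and "infinite {n. \<not> coprime n (int k) \<and> \<not> coprime (n + 1) (int k)}" (is "infinite ?S")
  shows "infinite (farey_components k)"
proof -
  let ?R = "(farey_edges k)\<^sup>*"
  define w where "w n = (n * int k + 1, int k * int k)" for n
  have "inj_on (\<lambda>n. ?R `` {w n}) ?S"
  proof (rule inj_onI)
    fix m n assume "m \<in> ?S" and classes: "?R `` {w m} = ?R `` {w n}"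
    have "w n \<in> ?R `` {w n}" by simp
    then have "(w m, w n) \<in> ?R" unfolding classes[symmetric] by simp
    moreover have "\<not> coprime m (int k)" "\<not> coprime (m + 1) (int k)" using \<open>m \<in> ?S\<close> by simp_all
    moreover have "w m \<in> farey_strip k m" "k > 0"
      using farey_strip_witness(2)[OF assms(1)] assms(1) unfolding w_def by auto
    ultimately have "w n \<in> farey_strip k m" by (blast intro: farey_strip_reachable_closed)
    then show "m = n" using farey_strip_witness(2)[OF assms(1)] unfolding w_def by simp
  qed
  moreover have "(\<lambda>n. ?R `` {w n}) ` ?S \<subseteq> farey_components k"
    using farey_strip_witness(1)[OF assms(1)] unfolding farey_components_def w_def
    by (auto intro: quotientI)
  ultimately show ?thesis using assms(2) finite_imageD finite_subset by blast
qed

lemma infinite_consecutive_not_coprime: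
  fixes p q K :: int
  assumes "coprime p q" "\<not> is_unit p" "\<not> is_unit q" "p dvd K" "q dvd K"
  shows "infinite {n. \<not> coprime n K \<and> \<not> coprime (n + 1) K}"
proof -
  obtain x y where bezout: "x * p + y * q = 1"
    using bezout_int[of p q] assms(1) by auto
  define seq where "seq j = y * q - 1 + int j * p * q" for j :: nat
  have "p dvd seq j" "q dvd seq j + 1" for j
  proof -
    have "seq j = p * (int j * q - x)" "seq j + 1 = q * (y + int j * p)"
      unfolding seq_def using bezout by (simp_all add: algebra_simps)
    then show "p dvd seq j" "q dvd seq j + 1" by simp_all
  qed
  then have "range seq \<subseteq> {n. \<not> coprime n K \<and> \<not> coprime (n + 1) K}"
    using assms(2-5) not_coprimeI by blast
  moreover have "p * q \<noteq> 0" using assms(1-3) by auto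
  then have "inj seq" unfolding seq_def by (intro injI) (simp add: mult.assoc)
  ultimately show ?thesis using infinite_iff_countable_subset by blast
qed

lemma two_prime_divisors_if_not_prime_power:
  fixes k :: nat
  assumes "k \<ge> 2" and "\<nexists>p l. prime p \<and> l > 0 \<and> k = p ^ l"
  obtains p q where "prime p" "prime q" "p \<noteq> q" "p dvd k" "q dvd k"
proof -
  obtain p where p: "prime p" "p dvd k" using prime_factor_nat[of k] assms(1) by auto
  obtain j m where m: "\<not> p dvd m" "k = m * p ^ j"
    using prime_power_canonical[OF p(1), of k] assms(1) by auto
  have "m \<noteq> 1"
  proof
    assume "m = 1"
    then have "k = p ^ j" "j > 0" using m(2) assms(1) by (auto intro: Nat.gr0I)
    then show False using assms(2) p(1) by blast
  qed
  then obtain q where q: "prime q" "q dvd m" using prime_factor_nat by blast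
  then have "q \<noteq> p" "q dvd k" using m by auto
  then show thesis using that p q by blast
qed

section \<open>Prime powers: the congruence classes are connected\<close>

definition farey_normalize :: "int \<times> int \<Rightarrow> int \<times> int" where
  "farey_normalize u = (if snd u > 0 \<or> (snd u = 0 \<and> fst u = 1) then u else (- fst u, - snd u))"

lemma farey_normalize_vertex: "u \<in> farey_vertices \<Longrightarrow> farey_normalize u = u"
  unfolding farey_normalize_def farey_vertices_def by auto

lemma farey_normalize_in_vertices:
  assumes "coprime (fst u) (snd u)"
  shows "farey_normalize u \<in> farey_vertices"
proof -
  have "snd u = 0 \<Longrightarrow> is_unit (fst u)" using assms by simp
  then have "snd u = 0 \<Longrightarrow> fst u = 1 \<or> fst u = -1" by auto
  then show ?thesis using assms unfolding farey_normalize_def farey_vertices_def by auto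
qed

lemma abs_det2_farey_normalize:
  "\<bar>det2 (farey_normalize u) (farey_normalize v)\<bar> = \<bar>det2 u v\<bar>"
proof -
  have "det2 (- fst u, - snd u) v = - det2 u v" "det2 u (- fst v, - snd v) = - det2 u v" for u v
    unfolding det2_def by simp_all
  then show ?thesis unfolding farey_normalize_def by simp
qed

definition unimodular_edges_avoiding :: "int \<Rightarrow> ((int \<times> int) \<times> (int \<times> int)) set" where
  "unimodular_edges_avoiding P =
     {(s, t). \<not> P dvd fst s \<and> \<not> P dvd fst t \<and> \<bar>det2 s t\<bar> = 1}"

lemma unimodular_descent_step:
  fixes P \<alpha> \<beta> :: int
  assumes "coprime \<alpha> \<beta>" "\<not> P dvd \<alpha>" "\<bar>\<beta>\<bar> \<ge> 2"
  shows "\<exists>\<gamma> \<delta>. \<alpha> * \<delta> - \<beta> * \<gamma> = 1 \<and> \<bar>\<delta>\<bar> < \<bar>\<beta>\<bar> \<and> \<not> P dvd \<gamma>"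
proof -
  obtain x y where bezout: "x * \<alpha> + y * \<beta> = 1" using bezout_int[of \<alpha> \<beta>] assms(1) by auto
  define \<delta> where "\<delta> = x mod \<beta>"
  define m where "m = x div \<beta>"
  define \<gamma> where "\<gamma> = - y - m * \<alpha>"
  text \<open>The solutions \<open>(\<gamma>, \<delta>)\<close> and \<open>(\<gamma> - \<alpha>, \<delta> - \<beta>)\<close> both have \<open>\<bar>\<delta>\<bar> < \<bar>\<beta>\<bar>\<close>, and since
    \<open>P \<nmid> \<alpha>\<close> at most one of \<open>\<gamma>\<close>, \<open>\<gamma> - \<alpha>\<close> is divisible by \<open>P\<close>.\<close>
  have "\<alpha> * \<delta> - \<beta> * \<gamma> = (\<delta> + \<beta> * m) * \<alpha> + y * \<beta>"
    unfolding \<gamma>_def by (simp add: algebra_simps)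
  also have "\<delta> + \<beta> * m = x" unfolding \<delta>_def m_def by (rule mod_mult_div_eq)
  finally have det: "\<alpha> * \<delta> - \<beta> * \<gamma> = 1" "\<alpha> * (\<delta> - \<beta>) - \<beta> * (\<gamma> - \<alpha>) = 1"
    using bezout by (simp_all add: algebra_simps)
  have "\<delta> \<noteq> 0"
  proof
    assume "\<delta> = 0"
    then have "\<beta> dvd \<alpha> * \<delta> - \<beta> * \<gamma>" by simp
    then have "\<beta> dvd 1" using det(1) by simp
    then show False using assms(3) by simp
  qed
  moreover have "0 \<le> \<delta> \<and> \<delta> < \<beta> \<or> \<beta> < \<delta> \<and> \<delta> \<le> 0"
    using assms(3) unfolding \<delta>_def by (cases "\<beta> > 0") auto
  ultimately have "\<bar>\<delta>\<bar> < \<bar>\<beta>\<bar> \<and> \<bar>\<delta> - \<beta>\<bar> < \<bar>\<beta>\<bar>" by auto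
  moreover have "\<not> P dvd \<gamma> \<or> \<not> P dvd \<gamma> - \<alpha>"
  proof (rule ccontr)
    assume "\<not> (\<not> P dvd \<gamma> \<or> \<not> P dvd \<gamma> - \<alpha>)"
    then have "P dvd \<gamma> - (\<gamma> - \<alpha>)" by (blast intro: dvd_diff)
    then show False using assms(2) by simp
  qed
  ultimately show ?thesis using det by blast
qed

lemma unimodular_edges_avoiding_reachable:
  fixes P \<alpha> \<beta> :: int
  assumes "coprime \<alpha> \<beta>" "\<not> P dvd \<alpha>"
  shows "((1, 0), (\<alpha>, \<beta>)) \<in> (unimodular_edges_avoiding P)\<^sup>*"
  using assms
proof (induction "nat \<bar>\<beta>\<bar>" arbitrary: \<alpha> \<beta> rule: less_induct)
  case less
  have "\<not> P dvd 1" using less.prems(2) dvd_trans one_dvd by blast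
  consider "\<beta> = 0" | "\<bar>\<beta>\<bar> = 1" | "\<bar>\<beta>\<bar> \<ge> 2" by linarith
  then show ?case
  proof cases
    case 1
    then have "is_unit \<alpha>" using less.prems(1) by simp
    then have "\<alpha> = 1 \<or> \<alpha> = -1" by auto
    moreover have "((1, 0), (1, 1)) \<in> unimodular_edges_avoiding P"
      "((1, 1), (-1, 0)) \<in> unimodular_edges_avoiding P"
      using \<open>\<not> P dvd 1\<close> unfolding unimodular_edges_avoiding_def det2_def by simp_all
    then have "((1, 0), (-1, 0)) \<in> (unimodular_edges_avoiding P)\<^sup>*"
      by (meson converse_rtrancl_into_rtrancl r_into_rtrancl)
    ultimately show ?thesis using 1 by auto
  next
    case 2
    then have "((1, 0), (\<alpha>, \<beta>)) \<in> unimodular_edges_avoiding P"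
      using \<open>\<not> P dvd 1\<close> less.prems unfolding unimodular_edges_avoiding_def det2_def by simp
    then show ?thesis by simp
  next
    case 3
    then obtain \<gamma> \<delta> where step: "\<alpha> * \<delta> - \<beta> * \<gamma> = 1" "\<bar>\<delta>\<bar> < \<bar>\<beta>\<bar>" "\<not> P dvd \<gamma>"
      using unimodular_descent_step[OF less.prems] by blast
    then have "\<bar>det2 (\<gamma>, \<delta>) (\<alpha>, \<beta>)\<bar> = 1" unfolding det2_def by (simp add: algebra_simps)
    then have "((\<gamma>, \<delta>), (\<alpha>, \<beta>)) \<in> unimodular_edges_avoiding P"
      "coprime \<gamma> \<delta>"
      using step(3) less.prems(2) coprime_if_abs_det2_eq_1[of "(\<gamma>, \<delta>)" "(\<alpha>, \<beta>)"]
      unfolding unimodular_edges_avoiding_def by auto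
    moreover have "((1, 0), (\<gamma>, \<delta>)) \<in> (unimodular_edges_avoiding P)\<^sup>*"
      using less.hyps[of \<delta> \<gamma>] step(2,3) \<open>coprime \<gamma> \<delta>\<close> by simp
    ultimately show ?thesis by simp
  qed
qed

definition farey_lift :: "int \<Rightarrow> int \<times> int \<Rightarrow> int \<times> int \<Rightarrow> int \<times> int \<Rightarrow> int \<times> int" where
  "farey_lift K u w s =
     (fst s * fst u + K * snd s * fst w, fst s * snd u + K * snd s * snd w)"

lemma det2_farey_lift:
  "det2 (farey_lift K u w s) (farey_lift K u w t) = K * det2 s t * det2 u w"
  unfolding farey_lift_def det2_def by (simp add: algebra_simps)

lemma coprime_farey_lift:
  assumes "det2 u w = 1" "coprime (fst s) (K * snd s)"
  shows "coprime (fst (farey_lift K u w s)) (snd (farey_lift K u w s))"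
proof (rule coprimeI)
  fix c assume "c dvd fst (farey_lift K u w s)" "c dvd snd (farey_lift K u w s)"
  then have "c dvd det2 (farey_lift K u w s) w" "c dvd det2 u (farey_lift K u w s)"
    unfolding det2_def by simp_all
  moreover have "det2 (farey_lift K u w s) w = fst s * det2 u w"
    "det2 u (farey_lift K u w s) = K * snd s * det2 u w"
    unfolding farey_lift_def det2_def by (simp_all add: algebra_simps)
  ultimately have "c dvd fst s" "c dvd K * snd s" using assms(1) by simp_all
  then show "is_unit c" using assms(2) coprime_common_divisor by blast
qed

lemma farey_lift_reachable:
  fixes P :: int
  assumes "prime P" "int k = P ^ l" "det2 u w = 1"
    and "(s, t) \<in> (unimodular_edges_avoiding P)\<^sup>*"
  shows "(farey_normalize (farey_lift (int k) u w s), farey_normalize (farey_lift (int k) u w t))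
           \<in> (farey_edges k)\<^sup>*"
  using assms(4)
proof induction
  case (step t t')
  let ?lift = "\<lambda>v. farey_normalize (farey_lift (int k) u w v)"
  have vertex: "?lift v \<in> farey_vertices" if "\<not> P dvd fst v" "coprime (fst v) (snd v)" for v
  proof -
    have "coprime (fst v) (int k)"
      using prime_imp_power_coprime[OF assms(1) \<open>\<not> P dvd fst v\<close>] assms(2) by simp
    then have "coprime (fst v) (int k * snd v)" using that(2) by simp
    then show ?thesis using farey_normalize_in_vertices coprime_farey_lift[OF assms(3)] by blast
  qed
  have "\<bar>det2 t t'\<bar> = 1" "\<not> P dvd fst t" "\<not> P dvd fst t'"
    using step.hyps(2) unfolding unimodular_edges_avoiding_def by auto
  then have "?lift t \<in> farey_vertices" "?lift t' \<in> farey_vertices"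
    "\<bar>det2 (?lift t) (?lift t')\<bar> = int k"
    using vertex coprime_if_abs_det2_eq_1[of t t'] assms(3)
    by (simp_all add: abs_det2_farey_normalize det2_farey_lift abs_mult)
  then have "(?lift t, ?lift t') \<in> farey_edges k" unfolding farey_edges_iff by blast
  with step.IH show ?case by simp
qed simp

lemma exists_det2_eq_1:
  assumes "coprime (fst u) (snd u)"
  obtains w where "det2 u w = 1"
proof -
  obtain y x where "y * fst u + x * snd u = 1"
    using bezout_int[of "fst u" "snd u"] assms by auto
  then have "det2 u (- x, y) = 1" unfolding det2_def by (simp add: algebra_simps)
  then show thesis by (rule that)
qed

lemma farey_lift_cramer:
  assumes "det2 u w = 1" "det2 u v = K * \<beta>"
  shows "farey_lift K u w (det2 v w, \<beta>) = v"
proof -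
  have "det2 v w * fst u + det2 u v * fst w = det2 u w * fst v"
    "det2 v w * snd u + det2 u v * snd w = det2 u w * snd v"
    unfolding det2_def by (simp_all add: algebra_simps)
  then show ?thesis using assms unfolding farey_lift_def by (simp add: prod_eq_iff)
qed

lemma farey_lift_preimage_unit:
  assumes "farey_lift K u w (\<alpha>, \<beta>) = v" "coprime (fst v) (snd v)" "c dvd \<alpha>" "c dvd K * \<beta>"
  shows "is_unit c"
proof -
  have "c dvd \<alpha> * x + K * \<beta> * y" for x y
    using assms(3,4) by (rule dvd_add[OF dvd_mult2 dvd_mult2])
  then have "c dvd fst v" "c dvd snd v" using assms(1) unfolding farey_lift_def by auto
  then show ?thesis using assms(2) coprime_common_divisor by blast
qed

lemma farey_reachable_if_cong:
  assumes "prime p" "l > 0" and cong: "(u, v) \<in> farey_cong (p ^ l)"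
  shows "(u, v) \<in> (farey_edges (p ^ l))\<^sup>*"
proof -
  define K where "K = int (p ^ l)"
  have vertices: "u \<in> farey_vertices" "v \<in> farey_vertices"
    and "K dvd det2 u v" using cong unfolding farey_cong_def K_def by auto
  then obtain \<beta> where \<beta>: "det2 u v = K * \<beta>" by blast
  obtain w where w: "det2 u w = 1" using exists_det2_eq_1 farey_vertex_coprime[OF vertices(1)] by blast
  define \<alpha> where "\<alpha> = det2 v w"
  have lift_v: "farey_lift K u w (\<alpha>, \<beta>) = v" unfolding \<alpha>_def using w \<beta> by (rule farey_lift_cramer)
  note preimage_unit = farey_lift_preimage_unit[OF lift_v farey_vertex_coprime[OF vertices(2)]]
  have "coprime \<alpha> \<beta>" using preimage_unit by (auto intro: coprimeI)
  moreover have "\<not> int p dvd \<alpha>"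
  proof
    assume "int p dvd \<alpha>"
    moreover have "int p dvd K" using \<open>l > 0\<close> unfolding K_def by (simp add: dvd_power)
    ultimately have "is_unit (int p)" using preimage_unit[of "int p"] dvd_mult2 by blast
    then show False using \<open>prime p\<close> by simp
  qed
  ultimately have "((1, 0), (\<alpha>, \<beta>)) \<in> (unimodular_edges_avoiding (int p))\<^sup>*"
    by (rule unimodular_edges_avoiding_reachable)
  moreover have "prime (int p)" "int (p ^ l) = int p ^ l" using \<open>prime p\<close> by simp_all
  ultimately have "(farey_normalize (farey_lift K u w (1, 0)),
      farey_normalize (farey_lift K u w (\<alpha>, \<beta>))) \<in> (farey_edges (p ^ l))\<^sup>*"
    unfolding K_def using farey_lift_reachable w by blast
  then show ?thesis
    using lift_v vertices farey_normalize_vertex by (simp add: farey_lift_def)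
qed

lemma farey_components_prime_power_eq:
  assumes "prime p" "l > 0"
  shows "farey_components (p ^ l) = farey_vertices // farey_cong (p ^ l)"
proof -
  have "(farey_edges (p ^ l))\<^sup>* `` {u} = farey_cong (p ^ l) `` {u}" if "u \<in> farey_vertices" for u
    using farey_reachable_imp_cong[OF _ that] farey_reachable_if_cong[OF assms] by blast
  then show ?thesis unfolding farey_components_def quotient_def by auto
qed

section \<open>Counting the congruence classes\<close>

lemma bij_betw_equiv_class_quotient:
  assumes "equiv A r" "Reps \<subseteq> A"
    and "\<And>a. a \<in> A \<Longrightarrow> \<exists>x\<in>Reps. (a, x) \<in> r"
    and "\<And>x y. x \<in> Reps \<Longrightarrow> y \<in> Reps \<Longrightarrow> (x, y) \<in> r \<Longrightarrow> x = y"
  shows "bij_betw (\<lambda>x. r `` {x}) Reps (A // r)"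
proof (rule bij_betw_imageI)
  show "inj_on (\<lambda>x. r `` {x}) Reps"
  proof (rule inj_onI)
    fix x y assume "x \<in> Reps" "y \<in> Reps" "r `` {x} = r `` {y}"
    then have "(x, y) \<in> r" using eq_equiv_class[OF _ assms(1)] assms(2) by blast
    then show "x = y" using assms(4) \<open>x \<in> Reps\<close> \<open>y \<in> Reps\<close> by blast
  qed
  show "(\<lambda>x. r `` {x}) ` Reps = A // r"
  proof
    show "(\<lambda>x. r `` {x}) ` Reps \<subseteq> A // r" using assms(2) by (auto intro: quotientI)
    show "A // r \<subseteq> (\<lambda>x. r `` {x}) ` Reps"
    proof
      fix X assume "X \<in> A // r"
      then obtain a where "a \<in> A" "X = r `` {a}" by (auto elim: quotientE)
      then obtain x where "x \<in> Reps" "(a, x) \<in> r" using assms(3) by blast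
      then have "X = r `` {x}" using \<open>X = r `` {a}\<close> equiv_class_eq[OF assms(1)] by blast
      then show "X \<in> (\<lambda>x. r `` {x}) ` Reps" using \<open>x \<in> Reps\<close> by blast
    qed
  qed
qed

definition farey_reps :: "nat \<Rightarrow> nat \<Rightarrow> (int \<times> int) set" where
  "farey_reps p l = (\<lambda>c. (1, c)) ` {0..<int (p ^ l)} \<union> (\<lambda>j. (int p * j, 1)) ` {0..<int (p ^ (l - 1))}"

lemma farey_reps_subset: "farey_reps p l \<subseteq> farey_vertices"
  unfolding farey_reps_def farey_vertices_def by auto

lemma card_farey_reps:
  assumes "prime p"
  shows "card (farey_reps p l) = p ^ l + p ^ (l - 1)"
proof -
  let ?A = "(\<lambda>c. (1::int, c)) ` {0..<int (p ^ l)}"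
  let ?B = "(\<lambda>j. (int p * j, 1::int)) ` {0..<int (p ^ (l - 1))}"
  have "?A \<inter> ?B = {}"
    using prime_gt_1_nat[OF assms] by (auto simp: zmult_eq_1_iff)
  moreover have "card ?A = p ^ l"
    by (subst card_image) (auto simp: inj_on_def simp del: of_nat_power)
  moreover have "card ?B = p ^ (l - 1)"
    using prime_gt_0_nat[OF assms] by (subst card_image) (auto simp: inj_on_def simp del: of_nat_power)
  ultimately show ?thesis unfolding farey_reps_def by (simp add: card_Un_disjoint)
qed

lemma exists_dvd_det2_first_kind:
  fixes K a b :: int
  assumes "K > 0" "coprime a K"
  shows "\<exists>c\<in>{0..<K}. K dvd det2 (a, b) (1, c)"
proof -
  obtain a' z where bezout: "a' * a + z * K = 1" using bezout_int[of a K] assms(2) by auto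
  define c where "c = (b * a') mod K"
  define m where "m = (b * a') div K"
  have "c + K * m = b * a'" unfolding c_def m_def by (rule mod_mult_div_eq)
  have "det2 (a, b) (1, c) = a * (c + K * m - b * a') + b * (a' * a + z * K - 1) - K * (b * z + a * m)"
    unfolding det2_def by (simp add: algebra_simps)
  also have "\<dots> = - K * (b * z + a * m)" using \<open>c + K * m = b * a'\<close> bezout by simp
  finally have "K dvd det2 (a, b) (1, c)" by simp
  moreover have "c \<in> {0..<K}" unfolding c_def using assms(1) by simp
  ultimately show ?thesis by blast
qed

lemma exists_dvd_det2_second_kind:
  fixes P M a b :: int
  assumes "M > 0" "P dvd a" "coprime b (P * M)"
  shows "\<exists>j\<in>{0..<M}. P * M dvd det2 (a, b) (P * j, 1)"
proof -
  obtain a1 where a: "a = P * a1" using assms(2) by blast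
  obtain b' z where bezout: "b' * b + z * (P * M) = 1" using bezout_int[of b "P * M"] assms(3) by auto
  define j where "j = (a1 * b') mod M"
  define m where "m = (a1 * b') div M"
  have "j + M * m = a1 * b'" unfolding j_def m_def by (rule mod_mult_div_eq)
  have "det2 (a, b) (P * j, 1) =
      - b * P * (j + M * m - a1 * b') - P * a1 * (b' * b + z * (P * M) - 1) + P * M * (b * m + P * a1 * z)"
    unfolding det2_def a by (simp add: algebra_simps)
  also have "\<dots> = P * M * (b * m + P * a1 * z)" using \<open>j + M * m = a1 * b'\<close> bezout by simp
  finally have "P * M dvd det2 (a, b) (P * j, 1)" by simp
  moreover have "j \<in> {0..<M}" unfolding j_def using assms(1) by simp
  ultimately show ?thesis by blast
qed

lemma farey_cong_rep_exists:
  assumes "prime p" "l > 0" "u \<in> farey_vertices"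
  shows "\<exists>r\<in>farey_reps p l. (u, r) \<in> farey_cong (p ^ l)"
proof -
  define P where "P = int p"
  define M where "M = int (p ^ (l - 1))"
  have "prime P" "P > 0" "M > 0"
    using assms(1) prime_gt_0_nat[OF assms(1)] unfolding P_def M_def by simp_all
  have K: "int (p ^ l) = P * M" "P ^ l = P * M"
    using assms(2) unfolding P_def M_def by (cases l; simp)+
  obtain a b where u: "u = (a, b)" by (cases u)
  have "coprime a b" using assms(3) farey_vertex_coprime u by fastforce
  have "\<exists>r\<in>farey_reps p l. P * M dvd det2 (a, b) r"
  proof (cases "P dvd a")
    case False
    then have "coprime a (P * M)" using prime_imp_power_coprime[OF \<open>prime P\<close> False, of l] K by simp
    then obtain c where "c \<in> {0..<P * M}" "P * M dvd det2 (a, b) (1, c)"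
      using exists_dvd_det2_first_kind[of "P * M" a b] \<open>P > 0\<close> \<open>M > 0\<close> by auto
    moreover have "(1, c) \<in> farey_reps p l"
      using \<open>c \<in> {0..<P * M}\<close> unfolding farey_reps_def K(1)[symmetric] by blast
    ultimately show ?thesis by blast
  next
    case True
    then have "\<not> P dvd b"
      using \<open>coprime a b\<close> \<open>prime P\<close> coprime_common_divisor not_prime_unit by blast
    then have "coprime b (P * M)" using prime_imp_power_coprime[OF \<open>prime P\<close>, of b l] K by simp
    then obtain j where "j \<in> {0..<M}" "P * M dvd det2 (a, b) (P * j, 1)"
      using exists_dvd_det2_second_kind[OF \<open>M > 0\<close> True] by blast
    moreover have "(P * j, 1) \<in> farey_reps p l"
      using \<open>j \<in> {0..<M}\<close> unfolding farey_reps_def P_def M_def by blast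
    ultimately show ?thesis by blast
  qed
  then obtain r where "r \<in> farey_reps p l" "int (p ^ l) dvd det2 u r" unfolding K u by blast
  moreover have "r \<in> farey_vertices" using \<open>r \<in> farey_reps p l\<close> farey_reps_subset by blast
  ultimately show ?thesis using assms(3) unfolding farey_cong_def by blast
qed

lemma farey_reps_cong_imp_eq:
  assumes "prime p" "l > 0"
    and "r \<in> farey_reps p l" "r' \<in> farey_reps p l" "(r, r') \<in> farey_cong (p ^ l)"
  shows "r = r'"
proof -
  define P where "P = int p"
  define M where "M = int (p ^ (l - 1))"
  have "P > 1" using prime_gt_1_nat[OF assms(1)] unfolding P_def by simp
  have K: "int (p ^ l) = P * M"
    using assms(2) unfolding P_def M_def by (cases l) simp_all
  have dvd: "P * M dvd det2 r r'" using assms(5) K unfolding farey_cong_def by simp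
  have not_dvd: "\<not> P dvd 1" using \<open>P > 1\<close> by simp
  have bounded_eq: "x = y" if "m dvd x - y" "0 \<le> x" "x < m" "0 \<le> y" "y < m" for m x y :: int
    using that by (metis mod_eq_dvd_iff mod_pos_pos_trivial)
  from assms(3,4) consider
      (AA) c c' where "r = (1, c)" "r' = (1, c')" "0 \<le> c" "c < P * M" "0 \<le> c'" "c' < P * M"
    | (AB) c j' where "r = (1, c)" "r' = (P * j', 1)"
    | (BA) j c' where "r = (P * j, 1)" "r' = (1, c')"
    | (BB) j j' where "r = (P * j, 1)" "r' = (P * j', 1)" "0 \<le> j" "j < M" "0 \<le> j'" "j' < M"
    unfolding farey_reps_def K[symmetric] unfolding P_def M_def by fastforce
  then show ?thesis
  proof cases
    case AA
    then show ?thesis using dvd bounded_eq[of "P * M" c' c] by (simp add: det2_def)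
  next
    case AB
    then have "det2 r r' + c * j' * P = 1" unfolding det2_def by (simp add: algebra_simps)
    moreover have "P dvd det2 r r' + c * j' * P" using dvd_mult_left[OF dvd] by simp
    ultimately show ?thesis using not_dvd by simp
  next
    case BA
    then have "P * j * c' - det2 r r' = 1" unfolding det2_def by (simp add: algebra_simps)
    moreover have "P dvd P * j * c' - det2 r r'" using dvd_mult_left[OF dvd] by simp
    ultimately show ?thesis using not_dvd by simp
  next
    case BB
    then have "M dvd j - j'" using dvd \<open>P > 1\<close> unfolding det2_def by (simp add: right_diff_distrib[symmetric])
    then show ?thesis using BB bounded_eq[of M j j'] by simp
  qed
qed

lemma farey_components_prime_power:
  assumes "prime p" "l > 0"
  shows "finite (farey_components (p ^ l))"
    and "card (farey_components (p ^ l)) = p ^ (l - 1) * (p + 1)"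
proof -
  have bij: "bij_betw (\<lambda>x. farey_cong (p ^ l) `` {x}) (farey_reps p l) (farey_components (p ^ l))"
    unfolding farey_components_prime_power_eq[OF assms]
    using equiv_farey_cong farey_reps_subset farey_cong_rep_exists[OF assms]
      farey_reps_cong_imp_eq[OF assms]
    by (rule bij_betw_equiv_class_quotient)
  moreover have "finite (farey_reps p l)" unfolding farey_reps_def by simp
  ultimately show "finite (farey_components (p ^ l))" using bij_betw_finite by blast
  have "card (farey_components (p ^ l)) = card (farey_reps p l)"
    using bij by (rule bij_betw_same_card[symmetric])
  also have "\<dots> = p ^ l + p ^ (l - 1)" using assms(1) by (rule card_farey_reps)
  also have "\<dots> = p ^ (l - 1) * (p + 1)" using assms(2) by (cases l) (simp_all add: algebra_simps)
  finally show "card (farey_components (p ^ l)) = p ^ (l - 1) * (p + 1)" .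
qed

theorem theorem1p1:
  fixes k :: nat
  assumes "k \<ge> 2"
  shows "(\<forall>p l. prime p \<and> l > 0 \<and> k = p ^ l \<longrightarrow>
            finite (farey_components k) \<and> card (farey_components k) = p ^ (l - 1) * (p + 1))
       \<and> ((\<nexists>p l. prime (p::nat) \<and> l > 0 \<and> k = p ^ l) \<longrightarrow> infinite (farey_components k))"
proof (intro conjI allI impI)
  fix p l :: nat assume "prime p \<and> l > 0 \<and> k = p ^ l"
  then show "finite (farey_components k)" "card (farey_components k) = p ^ (l - 1) * (p + 1)"
    using farey_components_prime_power by auto
next
  assume "\<nexists>p l. prime (p::nat) \<and> l > 0 \<and> k = p ^ l"
  then obtain p q where "prime p" "prime q" "p \<noteq> q" "p dvd k" "q dvd k"
    using two_prime_divisors_if_not_prime_power[OF assms] by blast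
  then have "infinite {n. \<not> coprime n (int k) \<and> \<not> coprime (n + 1) (int k)}"
    using primes_coprime[of p q]
    by (intro infinite_consecutive_not_coprime[of "int p" "int q"]) auto
  then show "infinite (farey_components k)"
    using infinite_farey_components_if_infinitely_many_strips[OF assms] by blast
qed

end
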